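(* Let $T$ be a complete theory with monster model $\mathcal{U}$, $A\subseteq\mathcal{U}$ small, $r,s\in[0,1]$ with $r+s=1$, $p\in S_x(\mathcal{U})$, and $\nu_1,\nu_2\in\mathfrak{M}_y(\mathcal{U})$ with $\operatorname{supp}(\nu_1)\cap\operatorname{supp}(\nu_2)=\emptyset$. If $\delta_p\geq_{\mathbb{E},A}\nu_1$ and $\delta_p\geq_{\mathbb{E},A}\nu_2$, then $\delta_p\geq_{\mathbb{E},Ab}r\nu_1+s\nu_2$ for some finite tuple $b$ from $\mathcal{U}$. In particular, if $q_1,\dots,q_n\in S_y(\mathcal{U})$ and $p\geq_{D,A}q_i$ for $i=1,\dots,n$, then there is a finite tuple $b$ from $\mathcal{U}$ such that $\delta_p\geq_{\mathbb{E},Ab}\sum_{i=1}^n r_i\delta_{q_i}$ for $r_i\geq0$ with $\sum_{i=1}^n r_i=1$.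
   Context: For $C\subseteq\mathcal{U}$, $\mathcal{L}_x(C)$ is the Boolean algebra of formulas in $x$ with parameters from $C$ modulo $T$, embedded in $\mathcal{L}_{xy}(C)$ via $\varphi(x)\mapsto\varphi(x)\wedge y=y$; $\mathfrak{M}_x(C)$ is the set of finitely additive probability measures on $\mathcal{L}_x(C)$. For $\omega\in\mathfrak{M}_{xy}(C)$, $\pi_x(\omega)(\varphi(x))=\omega(\varphi(x)\wedge y=y)$ (similarly $\pi_y$); $\omega|_D$ is restriction. $\delta_p$ is the Dirac measure of a type $p$. $\operatorname{supp}(\nu)$ is the set of $q\in S_y(\mathcal{U})$ with $\nu(\psi)>0$ for all $\psi\in q$. For small $C$, $\mu\geq_{\mathbb{E},C}\nu$ means there is $\lambda\in\mathfrak{M}_{xy}(C)$ with $\pi_x(\lambda)=\mu|_C$ such that every $\omega\in\mathfrak{M}_{xy}(\mathcal{U})$ with $\omega|_C=\lambda$ and $\pi_x(\omega)=\mu$ satisfies $\pi_y(\omega)=\nu$. $p\geq_{D,A}q$ means there is $r\in S_{xy}(A)$ with $p|_A\subseteq r$ and $p\cup r\vdash q$. $Ab$ denotes $A$ together with the entries of $b$. *)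

theory Defs
  imports Complex_Main
begin

datatype ('f, 'r) tm = Var nat | Fn 'f "('f, 'r) tm list"

datatype ('f, 'r) fm =
    Eq "('f, 'r) tm" "('f, 'r) tm"
  | Rel 'r "('f, 'r) tm list"
  | Neg "('f, 'r) fm"
  | Conj "('f, 'r) fm" "('f, 'r) fm"
  | Ex nat "('f, 'r) fm"

fun fv_tm :: "('f, 'r) tm \<Rightarrow> nat set" where
  "fv_tm (Var i) = {i}"
| "fv_tm (Fn f ts) = (\<Union>t\<in>set ts. fv_tm t)"

fun fv :: "('f, 'r) fm \<Rightarrow> nat set" where
  "fv (Eq s t) = fv_tm s \<union> fv_tm t"
| "fv (Rel R ts) = (\<Union>t\<in>set ts. fv_tm t)"
| "fv (Neg \<phi>) = fv \<phi>"
| "fv (Conj \<phi> \<psi>) = fv \<phi> \<union> fv \<psi>"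
| "fv (Ex x \<phi>) = fv \<phi> - {x}"

type_synonym ('f, 'r, 'u) struct = "('f \<Rightarrow> 'u list \<Rightarrow> 'u) \<times> ('r \<Rightarrow> 'u list \<Rightarrow> bool)"

fun eval_tm :: "('f, 'r, 'u) struct \<Rightarrow> (nat \<Rightarrow> 'u) \<Rightarrow> ('f, 'r) tm \<Rightarrow> 'u" where
  "eval_tm M e (Var i) = e i"
| "eval_tm M e (Fn f ts) = fst M f (map (eval_tm M e) ts)"

fun sat :: "('f, 'r, 'u) struct \<Rightarrow> (nat \<Rightarrow> 'u) \<Rightarrow> ('f, 'r) fm \<Rightarrow> bool" where
  "sat M e (Eq s t) = (eval_tm M e s = eval_tm M e t)"
| "sat M e (Rel R ts) = snd M R (map (eval_tm M e) ts)"
| "sat M e (Neg \<phi>) = (\<not> sat M e \<phi>)"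
| "sat M e (Conj \<phi> \<psi>) = (sat M e \<phi> \<and> sat M e \<psi>)"
| "sat M e (Ex x \<phi>) = (\<exists>a. sat M (e(x := a)) \<phi>)"

definition tuples :: "nat \<Rightarrow> 'u list set" where
  "tuples n = {a. length a = n}"

text \<open>Modulo T (= Th(U)), formulas in x with parameters from C are
  identified with the sets they define in the monster model, so this set of sets is the
  Boolean algebra L_x(C).\<close>
definition Dset :: "('f, 'r, 'u) struct \<Rightarrow> nat \<Rightarrow> 'u set \<Rightarrow> 'u list set set" where
  "Dset M n C = {X. \<exists>(\<phi>::('f,'r) fm) c. set c \<subseteq> C \<and> fv \<phi> \<subseteq> {..<n + length c} \<and>
       X = {a. length a = n \<and> sat M (\<lambda>i. (a @ c) ! i) \<phi>}}"

definition elementary_on :: "('f, 'r, 'u) struct \<Rightarrow> 'u set \<Rightarrow> ('u \<Rightarrow> 'u) \<Rightarrow> bool" where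
  "elementary_on M B h \<longleftrightarrow> (\<forall>(\<phi>::('f,'r) fm) c. set c \<subseteq> B \<longrightarrow> fv \<phi> \<subseteq> {..<length c} \<longrightarrow>
       (sat M (\<lambda>i. c ! i) \<phi> \<longleftrightarrow> sat M (\<lambda>i. map h c ! i) \<phi>))"

definition automorphism :: "('f, 'r, 'u) struct \<Rightarrow> ('u \<Rightarrow> 'u) \<Rightarrow> bool" where
  "automorphism M g \<longleftrightarrow> bij g \<and> (\<forall>f l. g (fst M f l) = fst M f (map g l)) \<and>
       (\<forall>R l. snd M R (map g l) = snd M R l)"

text \<open>M is a monster model with respect to the cardinal |K|: |K| exceeds the size of the
  language, M is |K|-saturated and strongly |K|-homogeneous. "Small" means of size < |K|.\<close>
definition small :: "'k set \<Rightarrow> 'u set \<Rightarrow> bool" where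
  "small K B \<longleftrightarrow> ordLess2 (card_of B) (card_of K)"

definition monster :: "('f, 'r, 'u) struct \<Rightarrow> 'k set \<Rightarrow> bool" where
  "monster M K \<longleftrightarrow>
     ordLess2 (card_of (UNIV :: ('f,'r) fm set)) (card_of K) \<and>
     (\<forall>B n \<Phi>. small K B \<longrightarrow> \<Phi> \<subseteq> Dset M n B \<longrightarrow>
        (\<forall>F. F \<subseteq> \<Phi> \<longrightarrow> finite F \<longrightarrow> \<Inter>F \<inter> tuples n \<noteq> {}) \<longrightarrow> \<Inter>\<Phi> \<inter> tuples n \<noteq> {}) \<and>
     (\<forall>B h. small K B \<longrightarrow> elementary_on M B h \<longrightarrow>
        (\<exists>g. automorphism M g \<and> (\<forall>b\<in>B. g b = h b)))"

text \<open>A complete type in n variables over B: an ultrafilter of the Boolean algebra L_x(B).\<close>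
definition is_type :: "('f, 'r, 'u) struct \<Rightarrow> nat \<Rightarrow> 'u set \<Rightarrow> 'u list set set \<Rightarrow> bool" where
  "is_type M n B p \<longleftrightarrow> p \<subseteq> Dset M n B \<and> tuples n \<in> p \<and> {} \<notin> p \<and>
     (\<forall>X\<in>p. \<forall>Y\<in>p. X \<inter> Y \<in> p) \<and>
     (\<forall>X\<in>p. \<forall>Y\<in>Dset M n B. X \<subseteq> Y \<longrightarrow> Y \<in> p) \<and>
     (\<forall>X\<in>Dset M n B. X \<in> p \<or> tuples n - X \<in> p)"

text \<open>A finitely additive probability measure on L_x(C) (values outside are irrelevant).\<close>
definition kmeasure :: "('f, 'r, 'u) struct \<Rightarrow> nat \<Rightarrow> 'u set \<Rightarrow> ('u list set \<Rightarrow> real) \<Rightarrow> bool" where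
  "kmeasure M n C \<mu> \<longleftrightarrow> \<mu> (tuples n) = 1 \<and> (\<forall>X\<in>Dset M n C. 0 \<le> \<mu> X) \<and>
     (\<forall>X\<in>Dset M n C. \<forall>Y\<in>Dset M n C. X \<inter> Y = {} \<longrightarrow> \<mu> (X \<union> Y) = \<mu> X + \<mu> Y)"

definition meq :: "('f, 'r, 'u) struct \<Rightarrow> nat \<Rightarrow> 'u set \<Rightarrow> ('u list set \<Rightarrow> real) \<Rightarrow> ('u list set \<Rightarrow> real) \<Rightarrow> bool" where
  "meq M n C \<mu> \<nu> \<longleftrightarrow> (\<forall>X\<in>Dset M n C. \<mu> X = \<nu> X)"

text \<open>Projections of a measure in variables xy (|x| = n, |y| = m): phi(x) is embedded as
  phi(x) and y=y, i.e. as the cylinder over X.\<close>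
definition pi_x :: "nat \<Rightarrow> nat \<Rightarrow> ('u list set \<Rightarrow> real) \<Rightarrow> ('u list set \<Rightarrow> real)" where
  "pi_x n m \<omega> X = \<omega> {ab. length ab = n + m \<and> take n ab \<in> X}"

definition pi_y :: "nat \<Rightarrow> nat \<Rightarrow> ('u list set \<Rightarrow> real) \<Rightarrow> ('u list set \<Rightarrow> real)" where
  "pi_y n m \<omega> Y = \<omega> {ab. length ab = n + m \<and> drop n ab \<in> Y}"

definition dirac :: "'u list set set \<Rightarrow> ('u list set \<Rightarrow> real)" where
  "dirac p X = (if X \<in> p then 1 else 0)"

definition supp :: "('f, 'r, 'u) struct \<Rightarrow> nat \<Rightarrow> ('u list set \<Rightarrow> real) \<Rightarrow> 'u list set set set" where
  "supp M m \<nu> = {q. is_type M m UNIV q \<and> (\<forall>\<psi>\<in>q. \<nu> \<psi> > 0)}"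

definition E_dom :: "('f, 'r, 'u) struct \<Rightarrow> nat \<Rightarrow> nat \<Rightarrow> 'u set \<Rightarrow>
    ('u list set \<Rightarrow> real) \<Rightarrow> ('u list set \<Rightarrow> real) \<Rightarrow> bool" where
  "E_dom M n m C \<mu> \<nu> \<longleftrightarrow>
     (\<exists>lam. kmeasure M (n + m) C lam \<and> meq M n C (pi_x n m lam) \<mu> \<and>
        (\<forall>\<omega>. kmeasure M (n + m) UNIV \<omega> \<and> meq M (n + m) C \<omega> lam \<and>
              meq M n UNIV (pi_x n m \<omega>) \<mu> \<longrightarrow> meq M m UNIV (pi_y n m \<omega>) \<nu>))"

text \<open>p \<ge>_{D,A} q: some r in S_xy(A) contains p|_A (embedded as cylinders) and p \<union> r \<turnstile> q;
  by compactness (p, r closed under conjunction), p \<union> r \<turnstile> psi iff some phi in p and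
  theta in r satisfy  phi(x) and theta(x,y) \<rightarrow> psi(y)  in U.\<close>
definition D_dom :: "('f, 'r, 'u) struct \<Rightarrow> nat \<Rightarrow> nat \<Rightarrow> 'u set \<Rightarrow>
    'u list set set \<Rightarrow> 'u list set set \<Rightarrow> bool" where
  "D_dom M n m A p q \<longleftrightarrow>
     (\<exists>r. is_type M (n + m) A r \<and>
        (\<forall>X\<in>p \<inter> Dset M n A. {ab. length ab = n + m \<and> take n ab \<in> X} \<in> r) \<and>
        (\<forall>Y\<in>q. \<exists>X\<in>p. \<exists>Z\<in>r.
            {ab. length ab = n + m \<and> take n ab \<in> X} \<inter> Z \<subseteq> {ab. drop n ab \<in> Y}))"

end

theory Submission
  imports Defs
begin

text \<open>Let \<omega>1, \<omega>2 be global extensions witnessing \<delta>_p \<ge>_{E,A} \<nu>1, \<nu>2. Since the supports are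
  disjoint, some formula \<psi>(y, b) has \<nu>1-measure 1 and \<nu>2-measure 0; its cylinder \<Psi> then has
  \<omega>1-measure 1 and \<omega>2-measure 0. Let \<omega> be any extension of r \<omega>1 + s \<omega>2 restricted to Ab with
  x-marginal \<delta>_p. Conditioning \<omega> on \<Psi> and on its complement gives extensions of \<omega>1|A and
  \<omega>2|A with x-marginal \<delta>_p (the x-marginal is 0-1 valued, hence independent of \<Psi>), so their
  y-marginals are \<nu>1 and \<nu>2, and the y-marginal of \<omega> is r \<nu>1 + s \<nu>2.

  For the second statement, p \<ge>_{D,A} q gives \<delta>_p \<ge>_{E,A} \<delta>_q with the Dirac measure of the
  type r in the definition of \<ge>_D, and distinct global types have disjoint supports, so the first
  statement applies inductively.\<close>

lemma eval_tm_cong: "(\<forall>i\<in>fv_tm t. e i = e' i) \<Longrightarrow> eval_tm M e t = eval_tm M e' t"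
proof (induction t)
  case (Fn f ts)
  have "map (eval_tm M e) ts = map (eval_tm M e') ts"
    by (rule map_cong) (use Fn in auto)
  then show ?case by (simp only: eval_tm.simps)
qed simp

lemma sat_cong: "(\<forall>i\<in>fv \<phi>. e i = e' i) \<Longrightarrow> sat M e \<phi> = sat M e' \<phi>"
proof (induction \<phi> arbitrary: e e')
  case (Eq s t)
  then show ?case using eval_tm_cong[of s e e' M] eval_tm_cong[of t e e' M] by simp
next
  case (Rel R ts)
  have "map (eval_tm M e) ts = map (eval_tm M e') ts"
    by (rule map_cong) (use Rel in \<open>auto intro: eval_tm_cong\<close>)
  then show ?case by (simp only: sat.simps)
next
  case (Conj \<phi> \<psi>)
  have "sat M e \<phi> = sat M e' \<phi>" "sat M e \<psi> = sat M e' \<psi>"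
    using Conj.prems by (auto intro!: Conj.IH)
  then show ?case by simp
next
  case (Ex x \<phi>)
  then have "\<And>a. sat M (e(x := a)) \<phi> = sat M (e'(x := a)) \<phi>" by (intro Ex.IH) auto
  then show ?case by simp
qed simp_all

fun rename_tm :: "(nat \<Rightarrow> nat) \<Rightarrow> ('f, 'r) tm \<Rightarrow> ('f, 'r) tm" where
  "rename_tm g (Var i) = Var (g i)"
| "rename_tm g (Fn f ts) = Fn f (map (rename_tm g) ts)"

fun rename :: "(nat \<Rightarrow> nat) \<Rightarrow> ('f, 'r) fm \<Rightarrow> ('f, 'r) fm" where
  "rename g (Eq s t) = Eq (rename_tm g s) (rename_tm g t)"
| "rename g (Rel R ts) = Rel R (map (rename_tm g) ts)"
| "rename g (Neg \<phi>) = Neg (rename g \<phi>)"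
| "rename g (Conj \<phi> \<psi>) = Conj (rename g \<phi>) (rename g \<psi>)"
| "rename g (Ex x \<phi>) = Ex (g x) (rename g \<phi>)"

lemma eval_rename_tm: "eval_tm M e (rename_tm g t) = eval_tm M (e \<circ> g) t"
proof (induction t)
  case (Fn f ts)
  have "map (eval_tm M e \<circ> rename_tm g) ts = map (eval_tm M (e \<circ> g)) ts"
    by (rule map_cong) (use Fn in \<open>auto simp: comp_def\<close>)
  then show ?case by (simp only: eval_tm.simps rename_tm.simps map_map)
qed simp

lemma fv_rename_tm: "fv_tm (rename_tm g t) = g ` fv_tm t"
  by (induction t) auto

text \<open>Bound variables are renamed as well, so injectivity of the renaming is all that is needed.\<close>

lemma sat_rename: "inj g \<Longrightarrow> sat M e (rename g \<phi>) = sat M (e \<circ> g) \<phi>"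
proof (induction \<phi> arbitrary: e)
  case (Ex x \<phi>)
  then have "\<And>a. (e(g x := a)) \<circ> g = (e \<circ> g)(x := a)"
    by (auto simp: inj_eq fun_eq_iff)
  then have "\<And>a. sat M (e(g x := a)) (rename g \<phi>) = sat M ((e \<circ> g)(x := a)) \<phi>"
    using Ex by metis
  then show ?case by (simp only: rename.simps sat.simps)
qed (auto simp: eval_rename_tm comp_def cong: map_cong)

lemma fv_rename: "inj g \<Longrightarrow> fv (rename g \<phi>) = g ` fv \<phi>"
  by (induction \<phi>) (auto simp: fv_rename_tm image_set_diff)

definition defset :: "('f, 'r, 'u) struct \<Rightarrow> nat \<Rightarrow> ('f, 'r) fm \<Rightarrow> 'u list \<Rightarrow> 'u list set" where
  "defset M k \<phi> c = {a. length a = k \<and> sat M (\<lambda>i. (a @ c) ! i) \<phi>}"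

lemma defset_in_Dset:
  "set c \<subseteq> C \<Longrightarrow> fv \<phi> \<subseteq> {..<k + length c} \<Longrightarrow> defset M k \<phi> c \<in> Dset M k C"
  unfolding Dset_def defset_def by blast

lemma DsetE:
  assumes "X \<in> Dset M k C"
  obtains \<phi> :: "('f, 'r) fm" and c
  where "set c \<subseteq> C" "fv \<phi> \<subseteq> {..<k + length c}" "X = defset M k \<phi> c"
  using assms unfolding Dset_def defset_def by blast

text \<open>Cylinders over definable sets, and definable sets re-expressed over a longer parameter list,
  are all obtained from this lemma with a suitable injective renaming g.\<close>

lemma defset_rename:
  assumes g: "inj g" and fv: "fv \<phi> \<subseteq> {..<k + length c}"
    and F: "\<And>a. length a = k' \<Longrightarrow> length (F a) = k"
    and coord: "\<And>a i. length a = k' \<Longrightarrow> i < k + length c \<Longrightarrow> (a @ d) ! g i = (F a @ c) ! i"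
  shows "defset M k' (rename g \<phi>) d = {a. length a = k' \<and> F a \<in> defset M k \<phi> c}"
proof -
  have sat_eq: "sat M (\<lambda>i. (a @ d) ! i) (rename g \<phi>) = sat M (\<lambda>i. (F a @ c) ! i) \<phi>"
    if "length a = k'" for a
    unfolding sat_rename[OF g]
  proof (rule sat_cong, intro ballI)
    fix i assume "i \<in> fv \<phi>"
    then have "i < k + length c" using fv by auto
    then show "((\<lambda>i. (a @ d) ! i) \<circ> g) i = (F a @ c) ! i" using coord[OF that] by simp
  qed
  show ?thesis
  proof (rule set_eqI)
    fix a
    show "a \<in> defset M k' (rename g \<phi>) d \<longleftrightarrow> a \<in> {a. length a = k' \<and> F a \<in> defset M k \<phi> c}"
      using sat_eq[of a] F[of a] unfolding defset_def by blast
  qed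
qed

lemma Dset_subset_tuples: "X \<in> Dset M k C \<Longrightarrow> X \<subseteq> tuples k"
  unfolding Dset_def tuples_def by auto

lemma Dset_mono: "C \<subseteq> C' \<Longrightarrow> Dset M k C \<subseteq> Dset M k C'"
  unfolding Dset_def by blast

lemma Dset_finite_params: "X \<in> Dset M k UNIV \<Longrightarrow> \<exists>c. X \<in> Dset M k (set c)"
  unfolding Dset_def by blast

lemma tuples_in_Dset: "tuples k \<in> Dset M k C"
proof -
  have "tuples k = defset M k (Ex 0 (Eq (Var 0) (Var 0))) []"
    by (simp add: tuples_def defset_def)
  also have "\<dots> \<in> Dset M k C" by (rule defset_in_Dset) auto
  finally show ?thesis .
qed

lemma defset_Neg: "defset M k (Neg \<phi>) c = tuples k - defset M k \<phi> c"
  by (auto simp: defset_def tuples_def)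

lemma defset_Conj: "defset M k (Conj \<phi> \<psi>) c = defset M k \<phi> c \<inter> defset M k \<psi> c"
  by (auto simp: defset_def)

lemma Dset_Diff_tuples:
  assumes "X \<in> Dset M k C" shows "tuples k - X \<in> Dset M k C"
proof -
  obtain \<phi> c where \<phi>: "set c \<subseteq> C" "fv \<phi> \<subseteq> {..<k + length c}" "X = defset M k \<phi> c"
    using assms by (rule DsetE)
  have "defset M k (Neg \<phi>) c \<in> Dset M k C" using \<phi> by (intro defset_in_Dset) auto
  then show ?thesis by (simp add: defset_Neg \<phi>(3))
qed

lemma Dset_Int:
  assumes "X \<in> Dset M k C" "Y \<in> Dset M k C"
  shows "X \<inter> Y \<in> Dset M k C"
proof -
  obtain \<phi> c where \<phi>: "set c \<subseteq> C" "fv \<phi> \<subseteq> {..<k + length c}" "X = defset M k \<phi> c"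
    using assms(1) by (rule DsetE)
  obtain \<psi> d where \<psi>: "set d \<subseteq> C" "fv \<psi> \<subseteq> {..<k + length d}" "Y = defset M k \<psi> d"
    using assms(2) by (rule DsetE)
  define g where "g i = (if i < k then i else i + length c)" for i
  have g: "inj g" by (auto simp: inj_on_def g_def split: if_splits)
  have "defset M k (rename id \<phi>) (c @ d) = {a. length a = k \<and> a \<in> X}"
    using \<phi> by (subst defset_rename[where F = "\<lambda>a. a" and k = k and c = c]) (auto simp: nth_append)
  also have "\<dots> = X" using \<phi>(3) by (auto simp: defset_def)
  finally have X: "defset M k (rename id \<phi>) (c @ d) = X" .
  have "defset M k (rename g \<psi>) (c @ d) = {a. length a = k \<and> a \<in> Y}"
    using \<psi> g
    by (subst defset_rename[where F = "\<lambda>a. a" and k = k and c = d and d = "c @ d"])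
      (auto simp: nth_append g_def)
  also have "\<dots> = Y" using \<psi>(3) by (auto simp: defset_def)
  finally have Y: "defset M k (rename g \<psi>) (c @ d) = Y" .
  have "defset M k (Conj (rename id \<phi>) (rename g \<psi>)) (c @ d) \<in> Dset M k C"
    using \<phi> \<psi> g by (intro defset_in_Dset) (auto simp: fv_rename g_def)
  then show ?thesis by (simp add: defset_Conj X Y)
qed

lemma Dset_Diff: "X \<in> Dset M k C \<Longrightarrow> Y \<in> Dset M k C \<Longrightarrow> X - Y \<in> Dset M k C"
proof -
  assume X: "X \<in> Dset M k C" and Y: "Y \<in> Dset M k C"
  then have "X - Y = X \<inter> (tuples k - Y)" using Dset_subset_tuples by blast
  then show ?thesis using X Y by (simp add: Dset_Diff_tuples Dset_Int)
qed

lemma Dset_Un: "X \<in> Dset M k C \<Longrightarrow> Y \<in> Dset M k C \<Longrightarrow> X \<union> Y \<in> Dset M k C"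
proof -
  assume X: "X \<in> Dset M k C" and Y: "Y \<in> Dset M k C"
  then have "X \<union> Y = tuples k - ((tuples k - X) \<inter> (tuples k - Y))"
    using Dset_subset_tuples by blast
  then show ?thesis using X Y by (simp add: Dset_Diff_tuples Dset_Int)
qed

definition cylx :: "nat \<Rightarrow> nat \<Rightarrow> 'u list set \<Rightarrow> 'u list set" where
  "cylx n m X = {ab. length ab = n + m \<and> take n ab \<in> X}"

definition cyly :: "nat \<Rightarrow> nat \<Rightarrow> 'u list set \<Rightarrow> 'u list set" where
  "cyly n m Y = {ab. length ab = n + m \<and> drop n ab \<in> Y}"

lemma pi_x_eq: "pi_x n m \<omega> X = \<omega> (cylx n m X)"
  by (simp add: pi_x_def cylx_def)

lemma pi_y_eq: "pi_y n m \<omega> Y = \<omega> (cyly n m Y)"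
  by (simp add: pi_y_def cyly_def)

lemma cylx_in_Dset:
  assumes "X \<in> Dset M n C" shows "cylx n m X \<in> Dset M (n + m) C"
proof -
  obtain \<phi> c where \<phi>: "set c \<subseteq> C" "fv \<phi> \<subseteq> {..<n + length c}" "X = defset M n \<phi> c"
    using assms by (rule DsetE)
  define g where "g i = (if i < n then i else i + m)" for i
  have g: "inj g" by (auto simp: inj_on_def g_def split: if_splits)
  have "defset M (n + m) (rename g \<phi>) c = cylx n m X"
    using \<phi> g by (subst defset_rename[where F = "take n" and k = n]) (auto simp: nth_append g_def cylx_def)
  moreover have "defset M (n + m) (rename g \<phi>) c \<in> Dset M (n + m) C"
    using \<phi> g by (intro defset_in_Dset) (auto simp: fv_rename g_def)
  ultimately show ?thesis by simp
qed

lemma cyly_in_Dset: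
  assumes "Y \<in> Dset M m C" shows "cyly n m Y \<in> Dset M (n + m) C"
proof -
  obtain \<psi> c where \<psi>: "set c \<subseteq> C" "fv \<psi> \<subseteq> {..<m + length c}" "Y = defset M m \<psi> c"
    using assms by (rule DsetE)
  have g: "inj (\<lambda>i. n + i)" by (simp add: inj_on_def)
  have "defset M (n + m) (rename (\<lambda>i. n + i) \<psi>) c = cyly n m Y"
    using \<psi> g by (subst defset_rename[where F = "drop n" and k = m]) (auto simp: nth_append cyly_def)
  moreover have "defset M (n + m) (rename (\<lambda>i. n + i) \<psi>) c \<in> Dset M (n + m) C"
    using \<psi> g by (intro defset_in_Dset) (auto simp: fv_rename)
  ultimately show ?thesis by simp
qed

lemma cyly_tuples: "cyly n m (tuples m) = tuples (n + m)"
  by (auto simp: cyly_def tuples_def)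

context
  fixes M :: "('f, 'r, 'u) struct" and k :: nat and C :: "'u set" and \<mu> :: "'u list set \<Rightarrow> real"
  assumes km: "kmeasure M k C \<mu>"
begin

lemma kmeasure_tuples: "\<mu> (tuples k) = 1"
  using km unfolding kmeasure_def by blast

lemma kmeasure_nonneg: "X \<in> Dset M k C \<Longrightarrow> 0 \<le> \<mu> X"
  using km unfolding kmeasure_def by blast

lemma kmeasure_add:
  "X \<in> Dset M k C \<Longrightarrow> Y \<in> Dset M k C \<Longrightarrow> X \<inter> Y = {} \<Longrightarrow> \<mu> (X \<union> Y) = \<mu> X + \<mu> Y"
  using km unfolding kmeasure_def by blast

lemma kmeasure_split:
  assumes "X \<in> Dset M k C" "Y \<in> Dset M k C"
  shows "\<mu> X = \<mu> (X \<inter> Y) + \<mu> (X - Y)"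
proof -
  have "\<mu> X = \<mu> ((X \<inter> Y) \<union> (X - Y))" by (simp add: Int_Diff_Un)
  also have "\<dots> = \<mu> (X \<inter> Y) + \<mu> (X - Y)"
    using assms by (intro kmeasure_add Dset_Int Dset_Diff) auto
  finally show ?thesis .
qed

lemma kmeasure_mono:
  assumes "X \<in> Dset M k C" "Y \<in> Dset M k C" "X \<subseteq> Y"
  shows "\<mu> X \<le> \<mu> Y"
  using kmeasure_split[OF assms(2,1)] kmeasure_nonneg[OF Dset_Diff[OF assms(2,1)]] assms(3)
  by (simp add: Int_absorb1)

lemma kmeasure_Diff_tuples:
  assumes "X \<in> Dset M k C" shows "\<mu> (tuples k - X) = 1 - \<mu> X"
proof -
  have "tuples k \<inter> X = X" using Dset_subset_tuples[OF assms] by blast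
  then show ?thesis using kmeasure_split[OF tuples_in_Dset assms] kmeasure_tuples by simp
qed

lemma kmeasure_le_1: "X \<in> Dset M k C \<Longrightarrow> \<mu> X \<le> 1"
  using kmeasure_nonneg[OF Dset_Diff_tuples] kmeasure_Diff_tuples by fastforce

lemma kmeasure_Int_zero:
  assumes "X \<in> Dset M k C" "Y \<in> Dset M k C" "\<mu> Y = 0"
  shows "\<mu> (X \<inter> Y) = 0"
  using kmeasure_mono[OF Dset_Int[OF assms(1,2)] assms(2)] kmeasure_nonneg[OF Dset_Int[OF assms(1,2)]]
    assms(3) by simp

lemma kmeasure_Int_one:
  assumes "X \<in> Dset M k C" "Y \<in> Dset M k C" "\<mu> Y = 1"
  shows "\<mu> (X \<inter> Y) = \<mu> X"
proof -
  have "X - Y = X \<inter> (tuples k - Y)" using Dset_subset_tuples[OF assms(1)] by blast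
  then have "\<mu> (X - Y) = \<mu> (X \<inter> (tuples k - Y))" by simp
  also have "\<dots> = 0"
    using assms by (intro kmeasure_Int_zero Dset_Diff_tuples) (simp_all add: kmeasure_Diff_tuples)
  finally show ?thesis using kmeasure_split[OF assms(1,2)] by simp
qed

lemma kmeasure_one_if_Int_subset:
  assumes "X \<in> Dset M k C" "Y \<in> Dset M k C" "W \<in> Dset M k C"
    and "X \<inter> Y \<subseteq> W" "\<mu> X = 1" "\<mu> Y = 1"
  shows "\<mu> W = 1"
  using kmeasure_Int_one[OF assms(1,2,6)] kmeasure_mono[OF Dset_Int[OF assms(1,2)] assms(3,4)]
    kmeasure_le_1[OF assms(3)] assms(5) by simp

lemma kmeasure_Int_zero_one:
  assumes "X \<in> Dset M k C" "Y \<in> Dset M k C" "\<mu> X = 0 \<or> \<mu> X = 1"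
  shows "\<mu> (X \<inter> Y) = \<mu> X * \<mu> Y"
proof -
  have "\<mu> (Y \<inter> X) = \<mu> X * \<mu> Y"
    using assms kmeasure_Int_zero[OF assms(2,1)] kmeasure_Int_one[OF assms(2,1)] by auto
  then show ?thesis by (simp add: Int_commute)
qed

end

lemma kmeasure_restrict_params:
  assumes "kmeasure M k C' \<mu>" "C \<subseteq> C'" shows "kmeasure M k C \<mu>"
proof -
  have "Dset M k C \<subseteq> Dset M k C'" using assms(2) by (rule Dset_mono)
  then show ?thesis using assms(1) unfolding kmeasure_def by (simp add: subset_iff)
qed

lemma kmeasure_mix:
  assumes "kmeasure M k C \<mu>1" "kmeasure M k C \<mu>2" "0 \<le> r" "0 \<le> s" "r + s = 1"
  shows "kmeasure M k C (\<lambda>X. r * \<mu>1 X + s * \<mu>2 X)"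
  using assms unfolding kmeasure_def by (simp add: distrib_left)

lemma kmeasure_conditional:
  assumes km: "kmeasure M k C \<mu>" and Z: "Z \<in> Dset M k C" and pos: "\<mu> Z > 0"
  shows "kmeasure M k C (\<lambda>X. \<mu> (X \<inter> Z) / \<mu> Z)"
  unfolding kmeasure_def
proof (intro conjI ballI impI)
  have "tuples k \<inter> Z = Z" using Dset_subset_tuples[OF Z] by blast
  then show "\<mu> (tuples k \<inter> Z) / \<mu> Z = 1" using pos by simp
next
  fix X assume "X \<in> Dset M k C"
  then have "0 \<le> \<mu> (X \<inter> Z)" using kmeasure_nonneg[OF km Dset_Int] Z by blast
  then show "0 \<le> \<mu> (X \<inter> Z) / \<mu> Z" using pos by simp
next
  fix X Y assume X: "X \<in> Dset M k C" and Y: "Y \<in> Dset M k C" and XY: "X \<inter> Y = {}"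
  have "(X \<union> Y) \<inter> Z = (X \<inter> Z) \<union> (Y \<inter> Z)" "(X \<inter> Z) \<inter> (Y \<inter> Z) = {}" using XY by blast+
  then have "\<mu> ((X \<union> Y) \<inter> Z) = \<mu> (X \<inter> Z) + \<mu> (Y \<inter> Z)"
    using kmeasure_add[OF km Dset_Int[OF X Z] Dset_Int[OF Y Z]] by simp
  then show "\<mu> ((X \<union> Y) \<inter> Z) / \<mu> Z = \<mu> (X \<inter> Z) / \<mu> Z + \<mu> (Y \<inter> Z) / \<mu> Z"
    by (simp add: add_divide_distrib)
qed

lemma kmeasure_pi_y:
  assumes km: "kmeasure M (n + m) C \<omega>" shows "kmeasure M m C (pi_y n m \<omega>)"
  unfolding kmeasure_def pi_y_eq
proof (intro conjI ballI impI)
  show "\<omega> (cyly n m (tuples m)) = 1" using kmeasure_tuples[OF km] by (simp only: cyly_tuples)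
next
  fix X assume "X \<in> Dset M m C"
  then show "0 \<le> \<omega> (cyly n m X)" using kmeasure_nonneg[OF km cyly_in_Dset] by blast
next
  fix X Y assume X: "X \<in> Dset M m C" and Y: "Y \<in> Dset M m C" and XY: "X \<inter> Y = {}"
  have "cyly n m (X \<union> Y) = cyly n m X \<union> cyly n m Y" "cyly n m X \<inter> cyly n m Y = {}"
    using XY by (auto simp: cyly_def)
  then show "\<omega> (cyly n m (X \<union> Y)) = \<omega> (cyly n m X) + \<omega> (cyly n m Y)"
    using kmeasure_add[OF km cyly_in_Dset[OF X] cyly_in_Dset[OF Y]] by simp
qed

lemma type_subset_Dset: "is_type M k C q \<Longrightarrow> q \<subseteq> Dset M k C"
  unfolding is_type_def by blast

lemma type_Int: "is_type M k C q \<Longrightarrow> X \<in> q \<Longrightarrow> Y \<in> q \<Longrightarrow> X \<inter> Y \<in> q"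
  unfolding is_type_def by blast

lemma type_upward: "is_type M k C q \<Longrightarrow> X \<in> q \<Longrightarrow> Y \<in> Dset M k C \<Longrightarrow> X \<subseteq> Y \<Longrightarrow> Y \<in> q"
  unfolding is_type_def by blast

lemma type_disjoint: "is_type M k C q \<Longrightarrow> X \<in> q \<Longrightarrow> X \<inter> Y = {} \<Longrightarrow> Y \<notin> q"
  unfolding is_type_def by metis

lemma type_Diff_tuples_iff:
  "is_type M k C q \<Longrightarrow> X \<in> Dset M k C \<Longrightarrow> tuples k - X \<in> q \<longleftrightarrow> X \<notin> q"
  using type_disjoint[of M k C q X "tuples k - X"] unfolding is_type_def by blast

lemma type_Un_iff:
  assumes q: "is_type M k C q" and X: "X \<in> Dset M k C" and Y: "Y \<in> Dset M k C"
  shows "X \<union> Y \<in> q \<longleftrightarrow> X \<in> q \<or> Y \<in> q"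
proof
  assume "X \<union> Y \<in> q"
  show "X \<in> q \<or> Y \<in> q"
  proof (rule ccontr)
    assume "\<not> (X \<in> q \<or> Y \<in> q)"
    then have "(tuples k - X) \<inter> (tuples k - Y) \<in> q"
      using q X Y by (simp add: type_Int type_Diff_tuples_iff)
    moreover have "(X \<union> Y) \<inter> ((tuples k - X) \<inter> (tuples k - Y)) = {}" by blast
    ultimately show False using type_disjoint[OF q \<open>X \<union> Y \<in> q\<close>] by blast
  qed
next
  show "X \<in> q \<or> Y \<in> q \<Longrightarrow> X \<union> Y \<in> q" using q X Y by (auto intro: type_upward Dset_Un)
qed

lemma type_subset_imp_eq:
  assumes q0: "is_type M k C q0" and q: "is_type M k C q" and sub: "q0 \<subseteq> q"
  shows "q0 = q"
proof (rule ccontr)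
  assume "q0 \<noteq> q"
  then obtain Z where Z: "Z \<in> q" "Z \<notin> q0" using sub by blast
  have D: "Z \<in> Dset M k C" using type_subset_Dset[OF q] Z(1) by blast
  then have "tuples k - Z \<in> q" using Z(2) sub by (simp add: type_Diff_tuples_iff[OF q0] subset_iff)
  then show False using Z(1) by (simp add: type_Diff_tuples_iff[OF q D])
qed

lemma type_separating_set:
  assumes q0: "is_type M k C q0" and "finite Q" and Q: "\<forall>q\<in>Q. is_type M k C q" and "q0 \<notin> Q"
  shows "\<exists>\<psi>\<in>q0. \<forall>q\<in>Q. \<psi> \<notin> q"
  using assms(2-4)
proof (induction Q rule: finite_induct)
  case empty
  then show ?case using q0 unfolding is_type_def by blast
next
  case (insert q Q)
  then obtain \<psi> where \<psi>: "\<psi> \<in> q0" "\<forall>q\<in>Q. \<psi> \<notin> q" by auto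
  have q: "is_type M k C q" and "q0 \<noteq> q" using insert.prems by auto
  then obtain \<chi> where \<chi>: "\<chi> \<in> q0" "\<chi> \<notin> q" using type_subset_imp_eq[OF q0] by blast
  have "\<psi> \<inter> \<chi> \<notin> q'" if "q' \<in> insert q Q" for q'
  proof
    assume "\<psi> \<inter> \<chi> \<in> q'"
    moreover have "is_type M k C q'" using that insert.prems by blast
    moreover have "\<psi> \<in> Dset M k C" "\<chi> \<in> Dset M k C" using \<psi> \<chi> type_subset_Dset[OF q0] by blast+
    ultimately have "\<psi> \<in> q'" "\<chi> \<in> q'" by (meson Int_lower1 Int_lower2 type_upward)+
    then show False using that \<psi> \<chi> by blast
  qed
  then show ?case using type_Int[OF q0 \<psi>(1) \<chi>(1)] by blast
qed

lemma dirac_kmeasure: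
  assumes q: "is_type M k C q" shows "kmeasure M k C (dirac q)"
  unfolding kmeasure_def
proof (intro conjI ballI impI)
  show "dirac q (tuples k) = 1" using q by (simp add: is_type_def dirac_def)
next
  fix X Y assume X: "X \<in> Dset M k C" and Y: "Y \<in> Dset M k C" and "X \<inter> Y = {}"
  then have "\<not> (X \<in> q \<and> Y \<in> q)" using type_disjoint[OF q] by blast
  then show "dirac q (X \<union> Y) = dirac q X + dirac q Y"
    using type_Un_iff[OF q X Y] by (auto simp: dirac_def)
qed (simp add: dirac_def)

lemma kmeasure_eq_dirac:
  assumes km: "kmeasure M k C \<mu>" and q: "is_type M k C q" and one: "\<forall>Y\<in>q. \<mu> Y = 1"
  shows "meq M k C \<mu> (dirac q)"
  unfolding meq_def
proof
  fix Y assume Y: "Y \<in> Dset M k C"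
  show "\<mu> Y = dirac q Y"
  proof (cases "Y \<in> q")
    case False
    then have "\<mu> (tuples k - Y) = 1" using one type_Diff_tuples_iff[OF q Y] by blast
    then show ?thesis using False kmeasure_Diff_tuples[OF km Y] by (simp add: dirac_def)
  qed (simp add: one dirac_def)
qed

section \<open>Separating measures with disjoint supports\<close>

definition has_fip :: "nat \<Rightarrow> 'u list set set \<Rightarrow> bool" where
  "has_fip k H \<longleftrightarrow> (\<forall>F. F \<subseteq> H \<longrightarrow> finite F \<longrightarrow> tuples k \<inter> \<Inter>F \<noteq> {})"

lemma has_fipD: "has_fip k H \<Longrightarrow> F \<subseteq> H \<Longrightarrow> finite F \<Longrightarrow> tuples k \<inter> \<Inter>F \<noteq> {}"
  unfolding has_fip_def by blast

lemma has_fip_insert: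
  assumes "has_fip k H" "F0 \<subseteq> H" "finite F0" "tuples k \<inter> \<Inter>F0 \<subseteq> Z"
  shows "has_fip k (insert Z H)"
  unfolding has_fip_def
proof (intro allI impI)
  fix F assume F: "F \<subseteq> insert Z H" "finite F"
  have "(F - {Z}) \<union> F0 \<subseteq> H" "finite ((F - {Z}) \<union> F0)" using F assms(2,3) by auto
  then obtain x where "x \<in> tuples k" "x \<in> \<Inter>((F - {Z}) \<union> F0)"
    using assms(1) unfolding has_fip_def by blast
  then have "x \<in> tuples k \<inter> \<Inter>F" using assms(4) by blast
  then show "tuples k \<inter> \<Inter>F \<noteq> {}" by blast
qed

lemma has_fip_insert_or_insert_Diff_tuples:
  assumes "has_fip k H"
  shows "has_fip k (insert X H) \<or> has_fip k (insert (tuples k - X) H)"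
proof (rule ccontr)
  assume "\<not> ?thesis"
  then have "\<not> has_fip k (insert X H)" "\<not> has_fip k (insert (tuples k - X) H)" by simp_all
  then obtain F1 F2 where F1: "F1 \<subseteq> insert X H" "finite F1" "tuples k \<inter> \<Inter>F1 = {}"
    and F2: "F2 \<subseteq> insert (tuples k - X) H" "finite F2" "tuples k \<inter> \<Inter>F2 = {}"
    unfolding has_fip_def by auto
  let ?F = "(F1 - {X}) \<union> (F2 - {tuples k - X})"
  have "?F \<subseteq> H" "finite ?F" using F1(1,2) F2(1,2) by auto
  then have "tuples k \<inter> \<Inter>?F \<noteq> {}" by (rule has_fipD[OF assms])
  then obtain x where x: "x \<in> tuples k \<inter> \<Inter>?F" by (metis equals0I)
  show False
  proof (cases "x \<in> X")
    case True
    then have "x \<in> tuples k \<inter> \<Inter>F1" using x by blast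
    then show False using F1(3) by blast
  next
    case False
    then have "x \<in> tuples k \<inter> \<Inter>F2" using x by blast
    then show False using F2(3) by blast
  qed
qed

lemma maximal_has_fip_is_type:
  assumes H: "H \<subseteq> Dset M k C" "has_fip k H"
    and max: "\<And>Z. Z \<in> Dset M k C \<Longrightarrow> has_fip k (insert Z H) \<Longrightarrow> Z \<in> H"
  shows "is_type M k C H"
  unfolding is_type_def
proof (intro conjI ballI impI)
  show "H \<subseteq> Dset M k C" by (fact H(1))
  have "has_fip k (insert (tuples k) H)" by (rule has_fip_insert[OF H(2), of "{}"]) auto
  then show "tuples k \<in> H" by (rule max[OF tuples_in_Dset])
  show "{} \<notin> H"
  proof
    assume "{} \<in> H"
    then have "tuples k \<inter> \<Inter>{{}} \<noteq> {}" using H(2) unfolding has_fip_def by blast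
    then show False by simp
  qed
next
  fix X Y assume X: "X \<in> H" and Y: "Y \<in> H"
  have "X \<inter> Y \<in> Dset M k C" using X Y H(1) by (intro Dset_Int) auto
  moreover have "has_fip k (insert (X \<inter> Y) H)"
    by (rule has_fip_insert[OF H(2), of "{X, Y}"]) (use X Y in auto)
  ultimately show "X \<inter> Y \<in> H" by (rule max)
next
  fix X Y assume X: "X \<in> H" and Y: "Y \<in> Dset M k C" and XY: "X \<subseteq> Y"
  have "has_fip k (insert Y H)" by (rule has_fip_insert[OF H(2), of "{X}"]) (use X XY in auto)
  with Y show "Y \<in> H" by (rule max)
next
  fix X assume X: "X \<in> Dset M k C"
  show "X \<in> H \<or> tuples k - X \<in> H"
  proof (cases "has_fip k (insert X H)")
    case True
    then show ?thesis using max[OF X] by blast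
  next
    case False
    then have "has_fip k (insert (tuples k - X) H)"
      using has_fip_insert_or_insert_Diff_tuples[OF H(2)] by blast
    then show ?thesis using max[OF Dset_Diff_tuples[OF X]] by blast
  qed
qed

lemma type_extending_has_fip:
  assumes G: "G \<subseteq> Dset M k C" "has_fip k G"
  obtains q where "is_type M k C q" "G \<subseteq> q"
proof -
  let ?A = "{H. G \<subseteq> H \<and> H \<subseteq> Dset M k C \<and> has_fip k H}"
  have "\<exists>H\<in>?A. \<forall>H'\<in>?A. H \<subseteq> H' \<longrightarrow> H' = H"
  proof (rule subset_Zorn_nonempty)
    show "?A \<noteq> {}" using G by blast
  next
    fix \<C> assume ne: "\<C> \<noteq> {}" and ch: "subset.chain ?A \<C>"
    then have CA: "\<C> \<subseteq> ?A" by (simp add: subset.chain_def)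
    have "has_fip k (\<Union>\<C>)" unfolding has_fip_def
    proof (intro allI impI)
      fix F assume F: "F \<subseteq> \<Union>\<C>" "finite F"
      then obtain H where "H \<in> \<C>" "F \<subseteq> H" using finite_subset_Union_chain[OF F(2,1) ne ch] by blast
      moreover have "has_fip k H" using CA \<open>H \<in> \<C>\<close> by blast
      ultimately show "tuples k \<inter> \<Inter>F \<noteq> {}" using has_fipD F(2) by blast
    qed
    then show "\<Union>\<C> \<in> ?A" using CA ne by blast
  qed
  then obtain H where HA: "H \<in> ?A" and max: "\<forall>H'\<in>?A. H \<subseteq> H' \<longrightarrow> H' = H"
    by (rule bexE)
  then have H: "G \<subseteq> H" "H \<subseteq> Dset M k C" "has_fip k H" by simp_all
  have "is_type M k C H"
  proof (rule maximal_has_fip_is_type[OF H(2,3)])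
    fix Z assume Z: "Z \<in> Dset M k C" "has_fip k (insert Z H)"
    have "G \<subseteq> insert Z H" "insert Z H \<subseteq> Dset M k C" using H(1,2) Z(1) by auto
    then have "insert Z H \<in> ?A" using Z(2) by simp
    then have "H \<subseteq> insert Z H \<longrightarrow> insert Z H = H" by (rule bspec[OF max])
    then show "Z \<in> H" by blast
  qed
  then show ?thesis using H(1) by (rule that)
qed

lemma kmeasure_one_Inter:
  assumes km: "kmeasure M k C \<nu>" and "finite F" "F \<subseteq> {X \<in> Dset M k C. \<nu> X = 1}"
  shows "tuples k \<inter> \<Inter>F \<in> Dset M k C \<and> \<nu> (tuples k \<inter> \<Inter>F) = 1"
  using assms(2,3)
proof (induction F rule: finite_induct)
  case empty
  then show ?case using tuples_in_Dset kmeasure_tuples[OF km] by simp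
next
  case (insert X F)
  then have X: "X \<in> Dset M k C" "\<nu> X = 1"
    and IH: "tuples k \<inter> \<Inter>F \<in> Dset M k C" "\<nu> (tuples k \<inter> \<Inter>F) = 1" by auto
  have "tuples k \<inter> \<Inter>(insert X F) = (tuples k \<inter> \<Inter>F) \<inter> X" by auto
  then show ?case using Dset_Int[OF IH(1) X(1)] kmeasure_Int_one[OF km IH(1) X] IH(2) by simp
qed

lemma in_supp_if_measure_one_subset:
  assumes km: "kmeasure M k UNIV \<nu>" and q: "is_type M k UNIV q"
    and one: "{X \<in> Dset M k UNIV. \<nu> X = 1} \<subseteq> q"
  shows "q \<in> supp M k \<nu>"
  unfolding supp_def
proof (intro CollectI conjI ballI q)
  fix \<psi> assume \<psi>: "\<psi> \<in> q"
  then have D: "\<psi> \<in> Dset M k UNIV" using type_subset_Dset[OF q] by blast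
  show "\<nu> \<psi> > 0"
  proof (rule ccontr)
    assume "\<not> \<nu> \<psi> > 0"
    then have "\<nu> (tuples k - \<psi>) = 1"
      using kmeasure_nonneg[OF km D] kmeasure_Diff_tuples[OF km D] by simp
    then have "tuples k - \<psi> \<in> q" using one Dset_Diff_tuples[OF D] by blast
    then show False using \<psi> type_Diff_tuples_iff[OF q D] by blast
  qed
qed

text \<open>Either the sets of measure one for the two measures have a common extension to a type,
  which then lies in both supports, or two of them are disjoint.\<close>

lemma disjoint_supp_separating_set:
  assumes k1: "kmeasure M k UNIV \<nu>1" and k2: "kmeasure M k UNIV \<nu>2"
    and disj: "supp M k \<nu>1 \<inter> supp M k \<nu>2 = {}"
  obtains \<psi> where "\<psi> \<in> Dset M k UNIV" "\<nu>1 \<psi> = 1" "\<nu>2 \<psi> = 0"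
proof -
  let ?G1 = "{X \<in> Dset M k UNIV. \<nu>1 X = 1}" and ?G2 = "{X \<in> Dset M k UNIV. \<nu>2 X = 1}"
  have "\<not> has_fip k (?G1 \<union> ?G2)"
  proof
    assume "has_fip k (?G1 \<union> ?G2)"
    then obtain q where "is_type M k UNIV q" "?G1 \<union> ?G2 \<subseteq> q"
      using type_extending_has_fip[of "?G1 \<union> ?G2"] by blast
    then have "q \<in> supp M k \<nu>1 \<inter> supp M k \<nu>2"
      using in_supp_if_measure_one_subset[OF k1] in_supp_if_measure_one_subset[OF k2] by blast
    then show False using disj by blast
  qed
  then obtain F where F: "F \<subseteq> ?G1 \<union> ?G2" "finite F" "tuples k \<inter> \<Inter>F = {}"
    unfolding has_fip_def by blast
  define X1 where "X1 = tuples k \<inter> \<Inter>(F \<inter> ?G1)"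
  define X2 where "X2 = tuples k \<inter> \<Inter>(F - ?G1)"
  have X1: "X1 \<in> Dset M k UNIV" "\<nu>1 X1 = 1"
    using kmeasure_one_Inter[OF k1, of "F \<inter> ?G1"] F(2) unfolding X1_def by blast+
  have X2: "X2 \<in> Dset M k UNIV" "\<nu>2 X2 = 1"
    using kmeasure_one_Inter[OF k2, of "F - ?G1"] F(1,2) unfolding X2_def by blast+
  have "X1 \<inter> X2 = tuples k - tuples k" using F(3) unfolding X1_def X2_def by blast
  then have "\<nu>2 X1 = \<nu>2 (tuples k - tuples k)" using kmeasure_Int_one[OF k2 X1(1) X2] by simp
  also have "\<dots> = 0" using kmeasure_Diff_tuples[OF k2 tuples_in_Dset] kmeasure_tuples[OF k2] by simp
  finally show ?thesis using that X1 by blast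
qed

section \<open>Witnesses of E-domination\<close>

text \<open>A witness \<omega> is a global extension of the measure \<lambda> = \<omega>|C in the definition of E_dom.
  E_dom also holds vacuously, for every \<nu>, when \<lambda> has no global extension with x-marginal \<delta>_p.\<close>

definition E_dom_witness :: "('f, 'r, 'u) struct \<Rightarrow> nat \<Rightarrow> nat \<Rightarrow> 'u set \<Rightarrow> 'u list set set \<Rightarrow>
    ('u list set \<Rightarrow> real) \<Rightarrow> ('u list set \<Rightarrow> real) \<Rightarrow> bool" where
  "E_dom_witness M n m C p \<nu> \<omega> \<longleftrightarrow>
     kmeasure M (n + m) UNIV \<omega> \<and> meq M n UNIV (pi_x n m \<omega>) (dirac p) \<and>
     (\<forall>\<omega>'. kmeasure M (n + m) UNIV \<omega>' \<and> meq M (n + m) C \<omega>' \<omega> \<and>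
        meq M n UNIV (pi_x n m \<omega>') (dirac p) \<longrightarrow> meq M m UNIV (pi_y n m \<omega>') \<nu>)"

lemma E_dom_witness_kmeasure: "E_dom_witness M n m C p \<nu> \<omega> \<Longrightarrow> kmeasure M (n + m) UNIV \<omega>"
  unfolding E_dom_witness_def by blast

lemma E_dom_witness_pi_x: "E_dom_witness M n m C p \<nu> \<omega> \<Longrightarrow> meq M n UNIV (pi_x n m \<omega>) (dirac p)"
  unfolding E_dom_witness_def by blast

lemma E_dom_witness_pi_y: "E_dom_witness M n m C p \<nu> \<omega> \<Longrightarrow> meq M m UNIV (pi_y n m \<omega>) \<nu>"
  unfolding E_dom_witness_def meq_def by blast

lemma E_dom_witness_mono:
  assumes S: "E_dom_witness M n m C p \<nu> \<omega>" and CC: "C \<subseteq> C'"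
  shows "E_dom_witness M n m C' p \<nu> \<omega>"
proof -
  have "meq M (n + m) C \<omega>' \<omega>" if "meq M (n + m) C' \<omega>' \<omega>" for \<omega>'
    using that Dset_mono[OF CC, of M "n + m"] unfolding meq_def by blast
  then show ?thesis using S unfolding E_dom_witness_def by blast
qed

lemma E_dom_if_witness:
  assumes S: "E_dom_witness M n m C p \<nu> \<omega>" shows "E_dom M n m C (dirac p) \<nu>"
proof -
  have "kmeasure M (n + m) C \<omega>"
    using kmeasure_restrict_params[OF E_dom_witness_kmeasure[OF S]] by blast
  moreover have "meq M n C (pi_x n m \<omega>) (dirac p)"
    using E_dom_witness_pi_x[OF S] Dset_mono[of C UNIV M n] unfolding meq_def by blast
  ultimately show ?thesis using S unfolding E_dom_def E_dom_witness_def by blast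
qed

lemma E_dom_witness_or_vacuous:
  assumes E: "E_dom M n m C (dirac p) \<nu>"
  shows "(\<forall>\<nu>'. E_dom M n m C (dirac p) \<nu>') \<or> (\<exists>\<omega>. E_dom_witness M n m C p \<nu> \<omega>)"
proof -
  obtain lam where lam: "kmeasure M (n + m) C lam" "meq M n C (pi_x n m lam) (dirac p)"
    and ext: "\<And>\<omega>. kmeasure M (n + m) UNIV \<omega> \<and> meq M (n + m) C \<omega> lam \<and>
      meq M n UNIV (pi_x n m \<omega>) (dirac p) \<Longrightarrow> meq M m UNIV (pi_y n m \<omega>) \<nu>"
    using E unfolding E_dom_def by blast
  show ?thesis
  proof (cases "\<exists>\<omega>. kmeasure M (n + m) UNIV \<omega> \<and> meq M (n + m) C \<omega> lam \<and>
      meq M n UNIV (pi_x n m \<omega>) (dirac p)")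
    case True
    then obtain \<omega> where \<omega>: "kmeasure M (n + m) UNIV \<omega>" "meq M (n + m) C \<omega> lam"
      "meq M n UNIV (pi_x n m \<omega>) (dirac p)" by blast
    have "meq M (n + m) C \<omega>' lam" if "meq M (n + m) C \<omega>' \<omega>" for \<omega>'
      using that \<omega>(2) unfolding meq_def by simp
    then have "E_dom_witness M n m C p \<nu> \<omega>" unfolding E_dom_witness_def using \<omega> ext by blast
    then show ?thesis by blast
  next
    case False
    then have "E_dom M n m C (dirac p) \<nu>'" for \<nu>' unfolding E_dom_def using lam by blast
    then show ?thesis by blast
  qed
qed

lemma E_dom_witness_conditional:
  assumes S: "E_dom_witness M n m C p \<nu> \<omega>a" and om: "kmeasure M (n + m) UNIV \<omega>"
    and px: "meq M n UNIV (pi_x n m \<omega>) (dirac p)" and \<Psi>: "\<Psi> \<in> Dset M (n + m) UNIV"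
    and r: "0 \<le> r" and agree: "\<And>X. X \<in> Dset M (n + m) C \<Longrightarrow> \<omega> (X \<inter> \<Psi>) = r * \<omega>a X"
    and Y: "Y \<in> Dset M m UNIV"
  shows "\<omega> (cyly n m Y \<inter> \<Psi>) = r * \<nu> Y"
proof -
  have cY: "cyly n m Y \<in> Dset M (n + m) UNIV" using cyly_in_Dset[OF Y] .
  have "tuples (n + m) \<inter> \<Psi> = \<Psi>" using Dset_subset_tuples[OF \<Psi>] by blast
  then have \<omega>\<Psi>: "\<omega> \<Psi> = r"
    using agree[OF tuples_in_Dset] kmeasure_tuples[OF E_dom_witness_kmeasure[OF S]] by simp
  show ?thesis
  proof (cases "r = 0")
    case True
    then show ?thesis using kmeasure_Int_zero[OF om cY \<Psi>] \<omega>\<Psi> by simp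
  next
    case False
    then have pos: "\<omega> \<Psi> > 0" using r \<omega>\<Psi> by simp
    define \<omega>' where "\<omega>' X = \<omega> (X \<inter> \<Psi>) / \<omega> \<Psi>" for X
    have "kmeasure M (n + m) UNIV \<omega>'"
      unfolding \<omega>'_def by (rule kmeasure_conditional[OF om \<Psi> pos])
    moreover have "meq M (n + m) C \<omega>' \<omega>a"
      unfolding meq_def \<omega>'_def using agree \<omega>\<Psi> pos by simp
    moreover have "meq M n UNIV (pi_x n m \<omega>') (dirac p)"
      unfolding meq_def pi_x_eq
    proof
      fix X assume X: "X \<in> Dset M n UNIV"
      then have "\<omega> (cylx n m X) = dirac p X" using px unfolding meq_def pi_x_eq by blast
      moreover have "\<omega> (cylx n m X \<inter> \<Psi>) = \<omega> (cylx n m X) * \<omega> \<Psi>"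
        using calculation by (intro kmeasure_Int_zero_one[OF om cylx_in_Dset[OF X] \<Psi>])
          (simp add: dirac_def)
      ultimately show "\<omega>' (cylx n m X) = dirac p X" using pos by (simp add: \<omega>'_def)
    qed
    ultimately have "meq M m UNIV (pi_y n m \<omega>') \<nu>" using S unfolding E_dom_witness_def by blast
    then have "\<omega>' (cyly n m Y) = \<nu> Y" using Y unfolding meq_def pi_y_eq by blast
    then show ?thesis using pos \<omega>\<Psi> by (simp add: \<omega>'_def field_simps)
  qed
qed

section \<open>Mixtures of witnesses\<close>

lemma E_dom_witness_mix_part:
  assumes S1: "E_dom_witness M n m C p \<nu>1 \<omega>1" and k2: "kmeasure M (n + m) UNIV \<omega>2"
    and \<Psi>: "\<Psi> \<in> Dset M (n + m) C" "\<omega>1 \<Psi> = 1" "\<omega>2 \<Psi> = 0" and r: "0 \<le> r"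
    and om: "kmeasure M (n + m) UNIV \<omega>" and px: "meq M n UNIV (pi_x n m \<omega>) (dirac p)"
    and agree: "meq M (n + m) C \<omega> (\<lambda>X. r * \<omega>1 X + s * \<omega>2 X)"
    and Y: "Y \<in> Dset M m UNIV"
  shows "\<omega> (cyly n m Y \<inter> \<Psi>) = r * \<nu>1 Y"
proof -
  have k1C: "kmeasure M (n + m) C \<omega>1"
    using kmeasure_restrict_params[OF E_dom_witness_kmeasure[OF S1] subset_UNIV] .
  have k2C: "kmeasure M (n + m) C \<omega>2" using kmeasure_restrict_params[OF k2 subset_UNIV] .
  have "\<omega> (X \<inter> \<Psi>) = r * \<omega>1 X" if X: "X \<in> Dset M (n + m) C" for X
  proof -
    have "\<omega> (X \<inter> \<Psi>) = r * \<omega>1 (X \<inter> \<Psi>) + s * \<omega>2 (X \<inter> \<Psi>)"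
      using agree Dset_Int[OF X \<Psi>(1)] unfolding meq_def by blast
    then show ?thesis using kmeasure_Int_one[OF k1C X \<Psi>(1,2)] kmeasure_Int_zero[OF k2C X \<Psi>(1,3)] by simp
  qed
  moreover have "\<Psi> \<in> Dset M (n + m) UNIV" using \<Psi>(1) Dset_mono[of C UNIV] by blast
  ultimately show ?thesis by (intro E_dom_witness_conditional[OF S1 om px _ r _ Y])
qed

lemma E_dom_witness_mix_separated:
  assumes S1: "E_dom_witness M n m C p \<nu>1 \<omega>1" and S2: "E_dom_witness M n m C p \<nu>2 \<omega>2"
    and \<Psi>: "\<Psi> \<in> Dset M (n + m) C" "\<omega>1 \<Psi> = 1" "\<omega>2 \<Psi> = 0"
    and rs: "0 \<le> r" "0 \<le> s" "r + s = 1"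
  shows "E_dom_witness M n m C p (\<lambda>Y. r * \<nu>1 Y + s * \<nu>2 Y) (\<lambda>X. r * \<omega>1 X + s * \<omega>2 X)"
proof -
  let ?\<omega> = "\<lambda>X. r * \<omega>1 X + s * \<omega>2 X" and ?\<Psi>' = "tuples (n + m) - \<Psi>"
  have k1: "kmeasure M (n + m) UNIV \<omega>1" and k2: "kmeasure M (n + m) UNIV \<omega>2"
    using S1 S2 by (simp_all add: E_dom_witness_kmeasure)
  have \<Psi>U: "\<Psi> \<in> Dset M (n + m) UNIV" using \<Psi>(1) Dset_mono[of C UNIV] by blast
  have \<Psi>': "?\<Psi>' \<in> Dset M (n + m) C" "\<omega>2 ?\<Psi>' = 1" "\<omega>1 ?\<Psi>' = 0"
    using \<Psi> \<Psi>U by (simp_all add: Dset_Diff_tuples kmeasure_Diff_tuples[OF k1] kmeasure_Diff_tuples[OF k2])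
  have "meq M n UNIV (pi_x n m ?\<omega>) (dirac p)"
    using E_dom_witness_pi_x[OF S1] E_dom_witness_pi_x[OF S2] rs(3)
    unfolding meq_def pi_x_eq by (metis distrib_right mult_1)
  moreover have "meq M m UNIV (pi_y n m \<omega>) (\<lambda>Y. r * \<nu>1 Y + s * \<nu>2 Y)"
    if om: "kmeasure M (n + m) UNIV \<omega>" and agree: "meq M (n + m) C \<omega> ?\<omega>"
      and px: "meq M n UNIV (pi_x n m \<omega>) (dirac p)" for \<omega>
    unfolding meq_def pi_y_eq
  proof
    fix Y assume Y: "Y \<in> Dset M m UNIV"
    have agree': "meq M (n + m) C \<omega> (\<lambda>X. s * \<omega>2 X + r * \<omega>1 X)"
      using agree unfolding meq_def by (simp add: add.commute)
    have cY: "cyly n m Y \<in> Dset M (n + m) UNIV" using cyly_in_Dset[OF Y] .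
    have "cyly n m Y - \<Psi> = cyly n m Y \<inter> ?\<Psi>'" using Dset_subset_tuples[OF cY] by blast
    then have "\<omega> (cyly n m Y) = \<omega> (cyly n m Y \<inter> \<Psi>) + \<omega> (cyly n m Y \<inter> ?\<Psi>')"
      using kmeasure_split[OF om cY \<Psi>U] by simp
    also have "\<dots> = r * \<nu>1 Y + s * \<nu>2 Y"
      using E_dom_witness_mix_part[OF S1 k2 \<Psi> rs(1) om px agree Y]
        E_dom_witness_mix_part[OF S2 k1 \<Psi>' rs(2) om px agree' Y] by simp
    finally show "\<omega> (cyly n m Y) = r * \<nu>1 Y + s * \<nu>2 Y" .
  qed
  ultimately show ?thesis unfolding E_dom_witness_def using kmeasure_mix[OF k1 k2 rs] by blast
qed

lemma E_dom_witness_mix: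
  assumes S1: "E_dom_witness M n m C p \<nu>1 \<omega>1" and S2: "E_dom_witness M n m C p \<nu>2 \<omega>2"
    and \<psi>: "\<psi> \<in> Dset M m UNIV" "\<nu>1 \<psi> = 1" "\<nu>2 \<psi> = 0"
    and rs: "0 \<le> r" "0 \<le> s" "r + s = 1"
  obtains c where
    "E_dom_witness M n m (C \<union> set c) p (\<lambda>Y. r * \<nu>1 Y + s * \<nu>2 Y) (\<lambda>X. r * \<omega>1 X + s * \<omega>2 X)"
proof -
  obtain c where c: "\<psi> \<in> Dset M m (set c)" using Dset_finite_params[OF \<psi>(1)] by blast
  then have "cyly n m \<psi> \<in> Dset M (n + m) (C \<union> set c)"
    using Dset_mono[of "set c" "C \<union> set c" M m] by (intro cyly_in_Dset) blast
  moreover have "\<omega>1 (cyly n m \<psi>) = 1" "\<omega>2 (cyly n m \<psi>) = 0"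
    using E_dom_witness_pi_y[OF S1] E_dom_witness_pi_y[OF S2] \<psi> unfolding meq_def pi_y_eq by simp_all
  ultimately show ?thesis
    using E_dom_witness_mono[OF S1] E_dom_witness_mono[OF S2] rs
    by (intro that E_dom_witness_mix_separated) auto
qed

lemma pi_x_dirac_eq_if_cylinders:
  assumes p: "is_type M n UNIV p" and \<rho>: "is_type M (n + m) A \<rho>"
    and cyl: "\<And>X. X \<in> p \<inter> Dset M n A \<Longrightarrow> cylx n m X \<in> \<rho>"
  shows "meq M n A (pi_x n m (dirac \<rho>)) (dirac p)"
  unfolding meq_def pi_x_eq
proof
  fix X assume X: "X \<in> Dset M n A"
  show "dirac \<rho> (cylx n m X) = dirac p X"
  proof (cases "X \<in> p")
    case True
    then show ?thesis using cyl X by (simp add: dirac_def)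
  next
    case False
    have "X \<in> Dset M n UNIV" using X Dset_mono[of A UNIV] by blast
    then have "tuples n - X \<in> p" using False type_Diff_tuples_iff[OF p] by blast
    then have "cylx n m (tuples n - X) \<in> \<rho>" using cyl Dset_Diff_tuples[OF X] by blast
    moreover have "cylx n m (tuples n - X) \<inter> cylx n m X = {}" by (auto simp: cylx_def)
    ultimately have "cylx n m X \<notin> \<rho>" by (rule type_disjoint[OF \<rho>])
    then show ?thesis using False by (simp add: dirac_def)
  qed
qed

lemma E_dom_dirac_if_D_dom:
  assumes p: "is_type M n UNIV p" and q: "is_type M m UNIV q" and D: "D_dom M n m A p q"
  shows "E_dom M n m A (dirac p) (dirac q)"
proof -
  obtain \<rho> where \<rho>: "is_type M (n + m) A \<rho>"
    and cyl: "\<And>X. X \<in> p \<inter> Dset M n A \<Longrightarrow> cylx n m X \<in> \<rho>"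
    and implies: "\<And>Y. Y \<in> q \<Longrightarrow> \<exists>X\<in>p. \<exists>Z\<in>\<rho>. cylx n m X \<inter> Z \<subseteq> {ab. drop n ab \<in> Y}"
    using D unfolding D_dom_def cylx_def by blast
  have "meq M m UNIV (pi_y n m \<omega>) (dirac q)"
    if om: "kmeasure M (n + m) UNIV \<omega>" and agree: "meq M (n + m) A \<omega> (dirac \<rho>)"
      and px: "meq M n UNIV (pi_x n m \<omega>) (dirac p)" for \<omega>
  proof (rule kmeasure_eq_dirac[OF kmeasure_pi_y[OF om] q], intro ballI)
    fix Y assume "Y \<in> q"
    then obtain X Z where XZ: "X \<in> p" "Z \<in> \<rho>" "cylx n m X \<inter> Z \<subseteq> {ab. drop n ab \<in> Y}"
      using implies by blast
    have ZA: "Z \<in> Dset M (n + m) A" using XZ(2) type_subset_Dset[OF \<rho>] by blast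
    then have ZU: "Z \<in> Dset M (n + m) UNIV" using Dset_mono[of A UNIV] by blast
    have XU: "X \<in> Dset M n UNIV" using XZ(1) type_subset_Dset[OF p] by blast
    have YU: "Y \<in> Dset M m UNIV" using \<open>Y \<in> q\<close> type_subset_Dset[OF q] by blast
    have "cylx n m X \<inter> Z \<subseteq> cyly n m Y"
      using XZ(3) Dset_subset_tuples[OF ZU] by (auto simp: cyly_def tuples_def)
    moreover have "\<omega> (cylx n m X) = 1"
      using px XU XZ(1) unfolding meq_def pi_x_eq by (simp add: dirac_def)
    moreover have "\<omega> Z = 1" using agree ZA XZ(2) unfolding meq_def by (simp add: dirac_def)
    ultimately show "pi_y n m \<omega> Y = 1" unfolding pi_y_eq
      by (rule kmeasure_one_if_Int_subset[OF om cylx_in_Dset[OF XU] ZU cyly_in_Dset[OF YU]])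
  qed
  then show ?thesis
    unfolding E_dom_def
    using dirac_kmeasure[OF \<rho>] pi_x_dirac_eq_if_cylinders[OF p \<rho> cyl] by blast
qed

lemma E_dom_witness_mix_insert:
  assumes S0: "E_dom_witness M n m A p (dirac q0) \<omega>0" and q0: "is_type M m UNIV q0"
    and Q: "finite Q" "\<forall>q\<in>Q. is_type M m UNIV q" "q0 \<notin> Q"
    and S: "E_dom_witness M n m (A \<union> set b) p (\<lambda>Y. \<Sum>q\<in>Q. v q * dirac q Y) \<omega>"
    and rt: "0 \<le> r" "0 \<le> t" "r + t = 1"
  shows "\<exists>b' \<omega>'. E_dom_witness M n m (A \<union> set b') p
           (\<lambda>Y. r * dirac q0 Y + t * (\<Sum>q\<in>Q. v q * dirac q Y)) \<omega>'"
proof -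
  obtain \<psi> where \<psi>: "\<psi> \<in> q0" "\<forall>q\<in>Q. \<psi> \<notin> q" using type_separating_set[OF q0 Q] by blast
  have \<psi>D: "\<psi> \<in> Dset M m UNIV" using \<psi>(1) type_subset_Dset[OF q0] by blast
  have \<psi>1: "dirac q0 \<psi> = 1" and \<psi>0: "(\<Sum>q\<in>Q. v q * dirac q \<psi>) = 0"
    using \<psi> by (simp_all add: dirac_def)
  have S0': "E_dom_witness M n m (A \<union> set b) p (dirac q0) \<omega>0"
    using S0 by (rule E_dom_witness_mono) blast
  obtain c where "E_dom_witness M n m (A \<union> set b \<union> set c) p
      (\<lambda>Y. r * dirac q0 Y + t * (\<Sum>q\<in>Q. v q * dirac q Y)) (\<lambda>X. r * \<omega>0 X + t * \<omega> X)"
    using E_dom_witness_mix[OF S0' S \<psi>D \<psi>1 \<psi>0 rt] .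
  then have "E_dom_witness M n m (A \<union> set (b @ c)) p
      (\<lambda>Y. r * dirac q0 Y + t * (\<Sum>q\<in>Q. v q * dirac q Y)) (\<lambda>X. r * \<omega>0 X + t * \<omega> X)"
    by (simp add: sup_assoc)
  then show ?thesis by blast
qed

lemma E_dom_witness_finite_mix:
  assumes "finite Q" and Q: "\<forall>q\<in>Q. is_type M m UNIV q \<and> (\<exists>\<omega>. E_dom_witness M n m A p (dirac q) \<omega>)"
    and w: "\<forall>q\<in>Q. 0 \<le> w q" "(\<Sum>q\<in>Q. w q) = 1"
  shows "\<exists>b \<omega>. E_dom_witness M n m (A \<union> set b) p (\<lambda>Y. \<Sum>q\<in>Q. w q * dirac q Y) \<omega>"
  using assms
proof (induction Q arbitrary: w rule: finite_induct)
  case empty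
  then show ?case by simp
next
  case (insert q0 Q)
  define t where "t = (\<Sum>q\<in>Q. w q)"
  have t: "0 \<le> w q0" "0 \<le> t" "w q0 + t = 1"
    using insert.prems insert.hyps unfolding t_def by (simp_all add: sum_nonneg)
  obtain \<omega>0 where S0: "E_dom_witness M n m A p (dirac q0) \<omega>0" using insert.prems by blast
  show ?case
  proof (cases "t = 0")
    case True
    then have "\<forall>q\<in>Q. w q = 0"
      using sum_nonneg_eq_0_iff[OF insert.hyps(1), of w] insert.prems unfolding t_def by simp
    then have "(\<lambda>Y. \<Sum>q\<in>insert q0 Q. w q * dirac q Y) = dirac q0"
      using insert.hyps t(3) True by (simp add: fun_eq_iff)
    then have "E_dom_witness M n m (A \<union> set []) p (\<lambda>Y. \<Sum>q\<in>insert q0 Q. w q * dirac q Y) \<omega>0"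
      using S0 by simp
    then show ?thesis by blast
  next
    case False
    then have "t > 0" using t(2) by simp
    have "\<exists>b \<omega>. E_dom_witness M n m (A \<union> set b) p (\<lambda>Y. \<Sum>q\<in>Q. w q / t * dirac q Y) \<omega>"
      using insert.prems \<open>t > 0\<close>
      by (intro insert.IH) (auto simp: t_def sum_divide_distrib[symmetric])
    then obtain b \<omega> where "E_dom_witness M n m (A \<union> set b) p (\<lambda>Y. \<Sum>q\<in>Q. w q / t * dirac q Y) \<omega>"
      by blast
    then have "\<exists>b' \<omega>'. E_dom_witness M n m (A \<union> set b') p
        (\<lambda>Y. w q0 * dirac q0 Y + t * (\<Sum>q\<in>Q. w q / t * dirac q Y)) \<omega>'"
      using insert by (intro E_dom_witness_mix_insert[OF S0 _ insert.hyps(1) _ insert.hyps(2) _ t]) auto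
    moreover have "(\<lambda>Y. w q0 * dirac q0 Y + t * (\<Sum>q\<in>Q. w q / t * dirac q Y)) =
        (\<lambda>Y. \<Sum>q\<in>insert q0 Q. w q * dirac q Y)"
      using insert.hyps \<open>t > 0\<close> by (simp add: fun_eq_iff sum_distrib_left)
    ultimately show ?thesis by simp
  qed
qed

lemma sum_nth_regroup:
  fixes f :: "nat \<Rightarrow> 'a::semiring_0"
  shows "(\<Sum>i<length xs. f i * g (xs ! i)) = (\<Sum>x\<in>set xs. (\<Sum>i | i < length xs \<and> xs ! i = x. f i) * g x)"
proof -
  have "(!) xs ` {..<length xs} = set xs" by (auto simp: in_set_conv_nth)
  then have "(\<Sum>i<length xs. f i * g (xs ! i)) =
      (\<Sum>x\<in>set xs. \<Sum>i | i \<in> {..<length xs} \<and> xs ! i = x. f i * g (xs ! i))"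
    using sum.image_gen[of "{..<length xs}" "\<lambda>i. f i * g (xs ! i)" "(!) xs"] by simp
  also have "\<dots> = (\<Sum>x\<in>set xs. (\<Sum>i | i < length xs \<and> xs ! i = x. f i) * g x)"
  proof (rule sum.cong[OF refl])
    fix x
    show "(\<Sum>i | i \<in> {..<length xs} \<and> xs ! i = x. f i * g (xs ! i)) =
        (\<Sum>i | i < length xs \<and> xs ! i = x. f i) * g x"
      unfolding sum_distrib_right by (rule sum.cong) auto
  qed
  finally show ?thesis .
qed

lemma E_dom_mix_of_disjoint_supp:
  assumes rs: "0 \<le> r" "0 \<le> s" "r + s = 1"
    and \<nu>: "kmeasure M m UNIV \<nu>1" "kmeasure M m UNIV \<nu>2" "supp M m \<nu>1 \<inter> supp M m \<nu>2 = {}"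
    and E: "E_dom M n m A (dirac p) \<nu>1" "E_dom M n m A (dirac p) \<nu>2"
  shows "\<exists>b. E_dom M n m (A \<union> set b) (dirac p) (\<lambda>X. r * \<nu>1 X + s * \<nu>2 X)"
proof (cases "\<forall>\<nu>. E_dom M n m A (dirac p) \<nu>")
  case True
  then show ?thesis by (intro exI[of _ "[]"]) simp
next
  case False
  obtain \<omega>1 where S1: "E_dom_witness M n m A p \<nu>1 \<omega>1"
    using E_dom_witness_or_vacuous[OF E(1)] False by blast
  obtain \<omega>2 where S2: "E_dom_witness M n m A p \<nu>2 \<omega>2"
    using E_dom_witness_or_vacuous[OF E(2)] False by blast
  obtain \<psi> where \<psi>: "\<psi> \<in> Dset M m UNIV" "\<nu>1 \<psi> = 1" "\<nu>2 \<psi> = 0"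
    using disjoint_supp_separating_set[OF \<nu>] by blast
  obtain c where "E_dom_witness M n m (A \<union> set c) p (\<lambda>Y. r * \<nu>1 Y + s * \<nu>2 Y)
      (\<lambda>X. r * \<omega>1 X + s * \<omega>2 X)"
    using E_dom_witness_mix[OF S1 S2 \<psi> rs] .
  then show ?thesis by (blast intro: E_dom_if_witness)
qed

text \<open>Repeated types in qs are merged: the weight of q is the sum of the weights of its occurrences.\<close>

lemma E_dom_mix_of_D_dom:
  assumes p: "is_type M n UNIV p" and qs: "\<forall>q\<in>set qs. is_type M m UNIV q \<and> D_dom M n m A p q"
    and rs: "length rs = length qs" "\<forall>x\<in>set rs. 0 \<le> x" "sum_list rs = 1"
  shows "\<exists>b. E_dom M n m (A \<union> set b) (dirac p) (\<lambda>X. \<Sum>i<length qs. rs ! i * dirac (qs ! i) X)"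
proof (cases "\<forall>\<nu>. E_dom M n m A (dirac p) \<nu>")
  case True
  then show ?thesis by (intro exI[of _ "[]"]) simp
next
  case False
  define w where "w q = (\<Sum>i | i < length qs \<and> qs ! i = q. rs ! i)" for q
  have "\<exists>\<omega>. E_dom_witness M n m A p (dirac q) \<omega>" if "q \<in> set qs" for q
    using E_dom_witness_or_vacuous[OF E_dom_dirac_if_D_dom[OF p]] qs that False by blast
  moreover have "\<forall>q\<in>set qs. 0 \<le> w q" using rs unfolding w_def by (auto intro!: sum_nonneg)
  moreover have "(\<Sum>q\<in>set qs. w q) = 1"
  proof -
    have "(\<Sum>q\<in>set qs. w q) = (\<Sum>i<length qs. rs ! i)"
      using sum_nth_regroup[where f = "(!) rs" and g = "\<lambda>_. 1" and xs = qs] by (simp add: w_def)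
    also have "\<dots> = sum_list rs" using rs by (simp add: sum_list_sum_nth atLeast0LessThan)
    finally show ?thesis using rs by simp
  qed
  ultimately obtain b \<omega> where "E_dom_witness M n m (A \<union> set b) p (\<lambda>Y. \<Sum>q\<in>set qs. w q * dirac q Y) \<omega>"
    using E_dom_witness_finite_mix[of "set qs"] qs by blast
  moreover have "(\<lambda>Y. \<Sum>q\<in>set qs. w q * dirac q Y) = (\<lambda>X. \<Sum>i<length qs. rs ! i * dirac (qs ! i) X)"
    unfolding w_def by (intro ext sum_nth_regroup[symmetric])
  ultimately show ?thesis by (auto intro: E_dom_if_witness)
qed

theorem corollary5p10:
  fixes M :: "('f, 'r, 'u) struct" and K :: "'k set" and A :: "'u set"
    and n m :: nat and p :: "'u list set set"
  assumes mon: "monster M K"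
    and smallA: "small K A"
    and p: "is_type M n UNIV p"
  shows "(\<forall>(r::real) s \<nu>1 \<nu>2. 0 \<le> r \<and> 0 \<le> s \<and> r + s = 1 \<and>
            kmeasure M m UNIV \<nu>1 \<and> kmeasure M m UNIV \<nu>2 \<and>
            supp M m \<nu>1 \<inter> supp M m \<nu>2 = {} \<and>
            E_dom M n m A (dirac p) \<nu>1 \<and> E_dom M n m A (dirac p) \<nu>2 \<longrightarrow>
            (\<exists>b. E_dom M n m (A \<union> set b) (dirac p) (\<lambda>X. r * \<nu>1 X + s * \<nu>2 X)))
       \<and> (\<forall>(qs :: 'u list set set list) (rs :: real list).
            (\<forall>q\<in>set qs. is_type M m UNIV q \<and> D_dom M n m A p q) \<and>
            length rs = length qs \<and> (\<forall>x\<in>set rs. 0 \<le> x) \<and> sum_list rs = 1 \<longrightarrow>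
            (\<exists>b. E_dom M n m (A \<union> set b) (dirac p)
                   (\<lambda>X. \<Sum>i<length qs. rs ! i * dirac (qs ! i) X)))"
  by (intro conjI allI impI; elim conjE;
      rule E_dom_mix_of_disjoint_supp E_dom_mix_of_D_dom[OF p]; assumption)

end
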